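(* Let $q,r,\nu$ be positive integers with $q+1\le\nu\le q+r-1$ (so $r\ge2$). Let \[ \bar K(z)=\begin{pmatrix} I_q\otimes F(z)+S_q\otimes F'(z) & -(\ell_q\varphi^\top)\otimes G(z)\\ 0 & I_{\nu-q}\otimes I_r-S_{\nu-q}\otimes G(z)\end{pmatrix}\in\mathbb{C}^{\nu r\times(\nu r-q)}. \] Then $\mathcal{N}^0(z)\bar K(z)=0$ for all $z$, and the columns of $\bar K(z)$ form a basis of the kernel of $\mathcal{N}^0(z)$.
   Context: Matrix indices start at $0$. $u(z)=(1,\dots,z^{q-1})^\top$, $w(z)=(1,\dots,z^{r-1})$, $M(z)=u(z)w(z)$, $\mathcal{N}^0(z)=\big(\frac{1}{0!}M(z),\dots,\frac{1}{(\nu-1)!}M^{(\nu-1)}(z)\big)\in\mathbb{C}^{q\times\nu r}$. $F(z)\in\mathbb{C}^{r\times(r-1)}$ has entries $F_{ii}=-z$, $F_{i+1,i}=1$, zero otherwise; $F'$ is its $z$-derivative. $G(z)\in\mathbb{C}^{r\times r}$ has entries $G_{ij}=z^{j-i-1}$ for $j>i$, $0$ otherwise. $S_n$ is the $n\times n$ shift matrix with $(S_n)_{ij}=\delta_{i+1,j}$. $\ell_q$ is the last standard basis vector of $\mathbb{R}^q$ and $\varphi$ the first standard basis vector of $\mathbb{R}^{\nu-q}$. Thus $\bar K$ has $q$ diagonal blocks $F$ (with $F'$ directly above each but the first), then $\nu-q$ diagonal blocks $I_r$ with $-G$ directly above each. *)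

theory Defs
  imports "HOL-Analysis.Derivative" "Jordan_Normal_Form.Matrix_Kernel"
begin

definition kron :: "'a::times mat \<Rightarrow> 'a mat \<Rightarrow> 'a mat" where
  "kron A B = mat (dim_row A * dim_row B) (dim_col A * dim_col B)
     (\<lambda>(i,j). A $$ (i div dim_row B, j div dim_col B) * B $$ (i mod dim_row B, j mod dim_col B))"

definition shift_mat :: "nat \<Rightarrow> complex mat" where
  "shift_mat n = mat n n (\<lambda>(i,j). if j = i + 1 then 1 else 0)"

text \<open>k-th derivative of M(z) = u(z) w(z), a q x r matrix with entries z^(i+j).\<close>
definition Mder :: "nat \<Rightarrow> nat \<Rightarrow> nat \<Rightarrow> complex \<Rightarrow> complex mat" where
  "Mder q r k z = mat q r (\<lambda>(i,j). (deriv ^^ k) (\<lambda>w. w ^ (i + j)) z)"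

text \<open>N^0(z) = (M(z)/0!, ..., M^(nu-1)(z)/(nu-1)!) in C^{q x nu r}.\<close>
definition N0 :: "nat \<Rightarrow> nat \<Rightarrow> nat \<Rightarrow> complex \<Rightarrow> complex mat" where
  "N0 q r \<nu> z = mat q (\<nu> * r)
     (\<lambda>(i,c). (Mder q r (c div r) z $$ (i, c mod r)) / of_nat (fact (c div r)))"

definition Fm :: "nat \<Rightarrow> complex \<Rightarrow> complex mat" where
  "Fm r z = mat r (r - 1) (\<lambda>(i,j). if i = j then - z else if i = j + 1 then 1 else 0)"

definition Fm' :: "nat \<Rightarrow> complex \<Rightarrow> complex mat" where
  "Fm' r z = mat r (r - 1) (\<lambda>(i,j). if i = j then - 1 else 0)"

definition Gm :: "nat \<Rightarrow> complex \<Rightarrow> complex mat" where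
  "Gm r z = mat r r (\<lambda>(i,j). if j > i then z ^ (j - i - 1) else 0)"

definition ellphi :: "nat \<Rightarrow> nat \<Rightarrow> complex mat" where
  "ellphi q \<nu> = mat q (\<nu> - q) (\<lambda>(i,j). if i = q - 1 \<and> j = 0 then 1 else 0)"

definition Kbar :: "nat \<Rightarrow> nat \<Rightarrow> nat \<Rightarrow> complex \<Rightarrow> complex mat" where
  "Kbar q r \<nu> z = four_block_mat
     (kron (1\<^sub>m q) (Fm r z) + kron (shift_mat q) (Fm' r z))
     (- kron (ellphi q \<nu>) (Gm r z))
     (0\<^sub>m ((\<nu> - q) * r) (q * (r - 1)))
     (kron (1\<^sub>m (\<nu> - q)) (1\<^sub>m r) - kron (shift_mat (\<nu> - q)) (Gm r z))"

end

theory Submission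
  imports Defs "HOL-Computational_Algebra.Polynomial"
begin

(* Read a vector of length nu r as nu polynomials of degree < r, one per block, and expand them
   at z: X_k is block k as a polynomial in t = w - z.  The entries of N0 are Taylor coefficients
   of w^(i+j) at z, so entry i of N0 x is sum_k [t^k] (t + z)^i X_k, a unitriangular combination
   of the constant terms of the tail sums Y_m = sum_(k >= m) X_k / t^(k-m) (negative powers of t
   dropped).  Hence x lies in the kernel iff Y_m has zero constant term for all m < q.
   In the same coordinates F, F' and G act as multiplication by t, negation and division by t,
   so block k of Kbar c is A_k - A_(k+1) / t, where A_k = t C_k for the q parameter blocks C_k of
   length r - 1 and A_k = D_(k-q) for the remaining blocks.  The tail sums invert this
   recursion: Y_m = A_m.  So N0 Kbar c = 0 because t divides A_m for m < q, Kbar c = 0 forces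
   c = 0, and a kernel vector x is Kbar c for the c whose A_m are the tail sums Y_m of x. *)

unbundle no vec_syntax

lemma higher_deriv_power:
  "(deriv ^^ k) (\<lambda>w. w ^ n) = (\<lambda>w::complex. of_nat (fact k * (n choose k)) * w ^ (n - k))"
proof (induction k)
  case 0
  show ?case by simp
next
  case (Suc k)
  have "Suc k * (n choose Suc k) = (n - k) * (n choose k)"
    by (simp only: binomial_absorption binomial_absorb_comp)
  then have fact_choose: "fact k * (n choose k) * (n - k) = fact (Suc k) * (n choose Suc k)"
    by (metis fact_Suc mult.assoc mult.commute of_nat_id)
  have "(deriv ^^ Suc k) (\<lambda>w. w ^ n) = deriv (\<lambda>w::complex. of_nat (fact k * (n choose k)) * w ^ (n - k))"
    by (simp only: funpow.simps(2) o_apply Suc.IH)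
  also have "\<dots> = (\<lambda>w. of_nat (fact k * (n choose k)) * (of_nat (n - k) * w ^ (n - Suc k)))"
    by (intro ext DERIV_imp_deriv) (auto intro!: derivative_eq_intros)
  also have "\<dots> = (\<lambda>w. of_nat (fact (Suc k) * (n choose Suc k)) * w ^ (n - Suc k))"
    unfolding fact_choose[symmetric] by (simp add: mult.assoc)
  finally show ?case .
qed

lemma higher_deriv_power_eq_coeff:
  "(deriv ^^ k) (\<lambda>w. w ^ n) (z::complex) / fact k = coeff ([:z, 1:] ^ n) k"
proof (cases "k \<le> n")
  case True
  then show ?thesis by (simp add: higher_deriv_power coeff_linear_poly_power field_simps)
next
  case False
  then show ?thesis by (simp add: higher_deriv_power binomial_eq_0 coeff_eq_0 degree_linear_power)
qed

lemma coeff_synthetic_div: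
  fixes p :: "'a::comm_semiring_1 poly"
  shows "coeff (synthetic_div p c) i = (\<Sum>j\<in>{Suc i..degree p}. c ^ (j - Suc i) * coeff p j)"
proof (induction p arbitrary: i)
  case 0
  then show ?case by simp
next
  case (pCons a p)
  show ?case
  proof (cases "p = 0")
    case True
    then show ?thesis by simp
  next
    case False
    then have deg: "degree (pCons a p) = Suc (degree p)" by simp
    show ?thesis
    proof (cases i)
      case 0
      have "coeff (synthetic_div (pCons a p) c) i = (\<Sum>j\<le>degree p. c ^ j * coeff p j)"
        using 0 by (simp add: poly_altdef ac_simps)
      then show ?thesis
        unfolding deg sum.shift_bounds_cl_Suc_ivl using 0 by (simp add: atMost_atLeast0)
    next
      case (Suc i')
      then show ?thesis
        unfolding deg sum.shift_bounds_cl_Suc_ivl using pCons.IH by simp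
    qed
  qed
qed

lemma degree_poly_shift: "degree (poly_shift n p) = degree p - n"
  by (cases "p = 0") (simp_all add: degree_eq_length_coeffs coeffs_shift_poly)

lemma poly_shift_Suc_pCons [simp]: "poly_shift (Suc n) (pCons a p) = poly_shift n p"
  by (rule poly_eqI) (simp add: coeff_poly_shift)

lemma pCons_0_poly_shift_1: "coeff p 0 = 0 \<Longrightarrow> pCons 0 (poly_shift 1 p) = p"
  by (rule poly_eqI) (simp add: coeff_pCons' coeff_poly_shift)

definition translate_poly :: "'a::comm_semiring_1 \<Rightarrow> 'a poly \<Rightarrow> 'a poly" where
  "translate_poly a p = pcompose p [:a, 1:]"

lemma translate_poly_translate_poly [simp]:
  "translate_poly a (translate_poly b p) = translate_poly (a + b) p"
  by (simp add: translate_poly_def pcompose_assoc[symmetric] pcompose_pCons add.commute)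

lemma translate_poly_0 [simp]: "translate_poly 0 p = p"
  by (simp add: translate_poly_def)

lemma translate_poly_inject [simp]:
  fixes a :: "'a::comm_ring_1"
  shows "translate_poly a p = translate_poly a q \<longleftrightarrow> p = q"
proof
  assume "translate_poly a p = translate_poly a q"
  then have "translate_poly (- a) (translate_poly a p) = translate_poly (- a) (translate_poly a q)"
    by (rule arg_cong)
  then show "p = q"
    by simp
qed simp

lemma translate_poly_zero [simp]: "translate_poly a 0 = 0"
  by (simp add: translate_poly_def)

lemma translate_poly_eq_0_iff [simp]:
  fixes a :: "'a::comm_ring_1"
  shows "translate_poly a p = 0 \<longleftrightarrow> p = 0"
  using translate_poly_inject[of a p 0] by simp

lemma translate_poly_diff:
  fixes a :: "'a::comm_ring_1"
  shows "translate_poly a (p - q) = translate_poly a p - translate_poly a q"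
  by (simp add: translate_poly_def pcompose_diff)

lemma degree_translate_poly [simp]:
  fixes a :: "'a::idom"
  shows "degree (translate_poly a p) = degree p"
  by (simp add: translate_poly_def degree_pcompose)

lemma translate_poly_monom:
  "translate_poly a (monom c n) = Polynomial.smult c ([:a, 1:] ^ n)"
proof -
  have "pcompose ([:0, 1:] ^ n) [:a, 1:] = [:a, 1:] ^ n"
    by (induction n) (simp_all add: pcompose_mult pcompose_pCons pcompose_1 del: mult_pCons_left)
  then show ?thesis
    by (simp add: translate_poly_def monom_altdef pcompose_smult)
qed

lemma translate_poly_linear_mult:
  fixes a :: "'a::comm_ring_1"
  shows "translate_poly a ([:-a, 1:] * p) = pCons 0 (translate_poly a p)"
  unfolding translate_poly_def pcompose_mult by (simp add: pcompose_pCons)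

lemma translate_poly_synthetic_div:
  fixes a :: "'a::comm_ring_1"
  shows "translate_poly a (synthetic_div p a) = poly_shift 1 (translate_poly a p)"
proof -
  have "translate_poly a p = translate_poly a ([:-a, 1:] * synthetic_div p a + [:poly p a:])"
    by (simp only: synthetic_div_correct')
  also have "\<dots> = pCons (poly p a) (translate_poly a (synthetic_div p a))"
    unfolding translate_poly_def pcompose_add pcompose_mult by (simp add: pcompose_pCons)
  finally show ?thesis
    by (simp add: poly_eq_iff coeff_poly_shift)
qed

section \<open>Vectors as lists of polynomials\<close>

definition poly_of_vec :: "'a::comm_semiring_1 vec \<Rightarrow> 'a poly" where
  "poly_of_vec v = (\<Sum>j<dim_vec v. monom (v $ j) j)"

lemma coeff_poly_of_vec: "coeff (poly_of_vec v) i = (if i < dim_vec v then v $ i else 0)"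
  unfolding poly_of_vec_def coeff_sum by simp

lemma degree_poly_of_vec_less: "0 < dim_vec v \<Longrightarrow> degree (poly_of_vec v) < dim_vec v"
  by (rule degree_lessI) (auto simp: coeff_poly_of_vec)

lemma poly_of_vec_vec_coeff: "degree p < n \<Longrightarrow> poly_of_vec (vec n (coeff p)) = p"
  by (rule poly_eqI) (auto simp: coeff_poly_of_vec coeff_eq_0)

lemma poly_of_vec_inject:
  assumes "dim_vec v = dim_vec w"
  shows "poly_of_vec v = poly_of_vec w \<longleftrightarrow> v = w"
proof
  assume eq: "poly_of_vec v = poly_of_vec w"
  show "v = w"
  proof (rule eq_vecI)
    fix i
    assume "i < dim_vec w"
    then show "v $ i = w $ i"
      using arg_cong[OF eq, of "\<lambda>p. coeff p i"] assms by (simp add: coeff_poly_of_vec)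
  qed (use assms in simp)
qed simp

lemma poly_of_vec_zero [simp]: "poly_of_vec (0\<^sub>v n) = 0"
  by (rule poly_eqI) (simp add: coeff_poly_of_vec)

lemma poly_of_vec_eq_0_iff: "poly_of_vec v = 0 \<longleftrightarrow> v = 0\<^sub>v (dim_vec v)"
  using poly_of_vec_inject[of v "0\<^sub>v (dim_vec v)"] by simp

lemma poly_of_vec_add:
  "dim_vec v = dim_vec w \<Longrightarrow> poly_of_vec (v + w) = poly_of_vec v + poly_of_vec w"
  by (rule poly_eqI) (simp add: coeff_poly_of_vec)

lemma poly_of_vec_diff:
  fixes v w :: "'a::comm_ring_1 vec"
  shows "dim_vec v = dim_vec w \<Longrightarrow> poly_of_vec (v - w) = poly_of_vec v - poly_of_vec w"
  by (rule poly_eqI) (simp add: coeff_poly_of_vec)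

lemma poly_of_vec_uminus:
  fixes v :: "'a::comm_ring_1 vec"
  shows "poly_of_vec (- v) = - poly_of_vec v"
  by (rule poly_eqI) (simp add: coeff_poly_of_vec)

lemma coeff_poly_of_vec_mult_vec:
  assumes "dim_vec v = dim_col A"
  shows "coeff (poly_of_vec (A *\<^sub>v v)) i =
    (if i < dim_row A then \<Sum>j<dim_col A. A $$ (i, j) * v $ j else 0)"
  using assms by (simp add: coeff_poly_of_vec scalar_prod_def lessThan_atLeast0)

lemma translate_poly_poly_of_vec:
  "translate_poly a (poly_of_vec v) = (\<Sum>j<dim_vec v. Polynomial.smult (v $ j) ([:a, 1:] ^ j))"
  unfolding poly_of_vec_def translate_poly_def pcompose_sum
  by (simp add: translate_poly_monom[unfolded translate_poly_def])

lemma sum_lessThan_mult: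
  fixes f :: "nat \<Rightarrow> 'a::comm_monoid_add"
  shows "(\<Sum>c<n * m. f c) = (\<Sum>b<n. \<Sum>j<m. f (b * m + j))"
proof -
  have "sum f {b * m..<b * m + m} = (\<Sum>j<m. f (b * m + j))" for b
    using sum.atLeastLessThan_shift_bounds[of f 0 "b * m" m]
    by (simp add: add.commute atLeast0LessThan)
  then show ?thesis
    by (simp add: sum.nat_group[symmetric])
qed

lemma block_index_less:
  assumes "k < n" "j < m"
  shows "k * m + j < n * (m::nat)"
proof -
  have "k * m + j < Suc k * m"
    using assms(2) by simp
  also have "\<dots> \<le> n * m"
    using assms(1) by (intro mult_right_mono) auto
  finally show ?thesis .
qed

definition vec_block :: "nat \<Rightarrow> 'a vec \<Rightarrow> nat \<Rightarrow> 'a vec" where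
  "vec_block m v k = vec m (\<lambda>j. v $ (k * m + j))"

definition vec_of_blocks :: "nat \<Rightarrow> nat \<Rightarrow> (nat \<Rightarrow> 'a vec) \<Rightarrow> 'a vec" where
  "vec_of_blocks m n f = vec (n * m) (\<lambda>i. f (i div m) $ (i mod m))"

lemma dim_vec_block [simp]: "dim_vec (vec_block m v k) = m"
  by (simp add: vec_block_def)

lemma vec_block_carrier [simp]: "vec_block m v k \<in> carrier_vec m"
  by (simp add: vec_block_def)

lemma vec_block_zero [simp]: "k < n \<Longrightarrow> vec_block m (0\<^sub>v (n * m)) k = 0\<^sub>v m"
  by (intro eq_vecI) (simp_all add: vec_block_def block_index_less)

lemma vec_block_add:
  assumes "u \<in> carrier_vec (n * m)" "w \<in> carrier_vec (n * m)" "k < n"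
  shows "vec_block m (u + w) k = vec_block m u k + vec_block m w k"
  using assms by (intro eq_vecI) (simp_all add: vec_block_def block_index_less)

lemma vec_block_diff:
  fixes u w :: "'a::ab_group_add vec"
  assumes "u \<in> carrier_vec (n * m)" "w \<in> carrier_vec (n * m)" "k < n"
  shows "vec_block m (u - w) k = vec_block m u k - vec_block m w k"
  using assms by (intro eq_vecI) (simp_all add: vec_block_def block_index_less)

lemma vec_block_uminus:
  fixes v :: "'a::ab_group_add vec"
  assumes "v \<in> carrier_vec (n * m)" "k < n"
  shows "vec_block m (- v) k = - vec_block m v k"
  using assms by (intro eq_vecI) (simp_all add: vec_block_def block_index_less)

lemma vec_block_append:
  assumes "u \<in> carrier_vec (n * m)" "w \<in> carrier_vec (n' * m)" "k < n + n'"
  shows "vec_block m (u @\<^sub>v w) k = (if k < n then vec_block m u k else vec_block m w (k - n))"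
proof (rule eq_vecI)
  fix j
  assume "j < dim_vec (if k < n then vec_block m u k else vec_block m w (k - n))"
  then have j: "j < m"
    by (simp split: if_splits)
  have "k * m + j < (n + n') * m"
    using assms(3) j by (rule block_index_less)
  moreover have "k * m + j - n * m = (k - n) * m + j" if "\<not> k < n"
    using that by (simp add: diff_mult_distrib)
  moreover have "k * m + j < n * m \<longleftrightarrow> k < n"
    using j block_index_less[of k n j m] by (auto dest: add_lessD1)
  ultimately show "vec_block m (u @\<^sub>v w) k $ j =
      (if k < n then vec_block m u k else vec_block m w (k - n)) $ j"
    using assms j by (auto simp: vec_block_def algebra_simps)
qed simp

lemma vec_of_blocks_carrier [simp]: "vec_of_blocks m n f \<in> carrier_vec (n * m)"
  by (simp add: vec_of_blocks_def)

lemma vec_block_vec_of_blocks: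
  assumes "k < n" "f k \<in> carrier_vec m"
  shows "vec_block m (vec_of_blocks m n f) k = f k"
  using assms by (intro eq_vecI) (simp_all add: vec_block_def vec_of_blocks_def block_index_less)

lemma eq_vec_blocksI:
  assumes "v \<in> carrier_vec (n * m)" "w \<in> carrier_vec (n * m)"
    and "\<And>k. k < n \<Longrightarrow> vec_block m v k = vec_block m w k"
  shows "v = w"
proof (rule eq_vecI)
  fix i
  assume "i < dim_vec w"
  then have "i < n * m"
    using assms(2) by simp
  moreover from this have "0 < m"
    by (cases m) auto
  ultimately have "i div m < n" "i mod m < m"
    by (simp_all add: less_mult_imp_div_less)
  then have "vec_block m v (i div m) $ (i mod m) = vec_block m w (i div m) $ (i mod m)"
    using assms(3) by simp
  then show "v $ i = w $ i"
    using \<open>i mod m < m\<close> by (simp add: vec_block_def)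
qed (use assms in simp)

lemma index_kron:
  assumes "A \<in> carrier_mat n1 n2" "B \<in> carrier_mat m1 m2"
    and "a < n1" "b < n2" "i < m1" "j < m2"
  shows "kron A B $$ (a * m1 + i, b * m2 + j) = A $$ (a, b) * B $$ (i, j)"
  using assms by (simp add: kron_def block_index_less)

lemma dim_kron [simp]:
  "dim_row (kron A B) = dim_row A * dim_row B" "dim_col (kron A B) = dim_col A * dim_col B"
  by (simp_all add: kron_def)

lemma kron_carrier [simp]:
  "A \<in> carrier_mat n1 n2 \<Longrightarrow> B \<in> carrier_mat m1 m2 \<Longrightarrow> kron A B \<in> carrier_mat (n1 * m1) (n2 * m2)"
  unfolding carrier_mat_def by auto

lemma poly_of_vec_block_kron_mult_vec:
  fixes A B :: "'a::comm_ring_1 mat"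
  assumes A: "A \<in> carrier_mat n1 n2" and B: "B \<in> carrier_mat m1 m2"
    and v: "v \<in> carrier_vec (n2 * m2)" and a: "a < n1"
  shows "poly_of_vec (vec_block m1 (kron A B *\<^sub>v v) a) =
    (\<Sum>b<n2. Polynomial.smult (A $$ (a, b)) (poly_of_vec (B *\<^sub>v vec_block m2 v b)))"
proof (rule poly_eqI)
  fix i
  show "coeff (poly_of_vec (vec_block m1 (kron A B *\<^sub>v v) a)) i =
      coeff (\<Sum>b<n2. Polynomial.smult (A $$ (a, b)) (poly_of_vec (B *\<^sub>v vec_block m2 v b))) i"
  proof (cases "i < m1")
    case True
    have "coeff (poly_of_vec (vec_block m1 (kron A B *\<^sub>v v) a)) i =
        (kron A B *\<^sub>v v) $ (a * m1 + i)"
      using True by (simp add: coeff_poly_of_vec vec_block_def)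
    also have "\<dots> = (\<Sum>c<n2 * m2. kron A B $$ (a * m1 + i, c) * v $ c)"
      using A B v True a by (auto simp: block_index_less scalar_prod_def intro!: sum.cong)
    also have "\<dots> = (\<Sum>b<n2. \<Sum>j<m2. A $$ (a, b) * (B $$ (i, j) * v $ (b * m2 + j)))"
      using A B a True by (simp add: sum_lessThan_mult index_kron mult.assoc)
    also have "\<dots> = coeff (\<Sum>b<n2. Polynomial.smult (A $$ (a, b)) (poly_of_vec (B *\<^sub>v vec_block m2 v b))) i"
      using B True by (simp add: coeff_sum coeff_poly_of_vec_mult_vec sum_distrib_left vec_block_def)
    finally show ?thesis .
  qed (use B in \<open>simp add: coeff_poly_of_vec coeff_sum\<close>)
qed

lemma mult_mat_eq_0I:
  fixes A B :: "'a::comm_ring_1 mat"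
  assumes A: "A \<in> carrier_mat nr n" and B: "B \<in> carrier_mat n nc"
    and zero: "\<And>c. c \<in> carrier_vec nc \<Longrightarrow> A *\<^sub>v (B *\<^sub>v c) = 0\<^sub>v nr"
  shows "A * B = 0\<^sub>m nr nc"
proof (rule eq_matI)
  fix i j
  assume "i < dim_row (0\<^sub>m nr nc)" "j < dim_col (0\<^sub>m nr nc)"
  then have i: "i < nr" and j: "j < nc"
    by simp_all
  have "col B j = B *\<^sub>v unit_vec nc j"
    using B j by (intro eq_vecI) simp_all
  then have "(A * B) $$ (i, j) = (A *\<^sub>v (B *\<^sub>v unit_vec nc j)) $ i"
    using A B i j by simp
  then show "(A * B) $$ (i, j) = 0\<^sub>m nr nc $$ (i, j)"
    using zero[of "unit_vec nc j"] i j by simp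
qed (use A B in simp_all)

section \<open>Shifted tail sums\<close>

definition shifted_tail_sum :: "nat \<Rightarrow> (nat \<Rightarrow> 'a::comm_monoid_add poly) \<Rightarrow> nat \<Rightarrow> 'a poly" where
  "shifted_tail_sum n X a = (\<Sum>k\<in>{a..<n}. poly_shift (k - a) (X k))"

lemma coeff_shifted_tail_sum:
  "coeff (shifted_tail_sum n X a) i = (\<Sum>k\<in>{a..<n}. coeff (X k) (i + (k - a)))"
  by (simp add: shifted_tail_sum_def coeff_sum coeff_poly_shift)

lemma shifted_tail_sum_empty [simp]: "n \<le> a \<Longrightarrow> shifted_tail_sum n X a = 0"
  by (simp add: shifted_tail_sum_def)

lemma shifted_tail_sum_step:
  assumes "a < n"
  shows "shifted_tail_sum n X a = X a + poly_shift 1 (shifted_tail_sum n X (Suc a))"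
proof (rule poly_eqI)
  fix i
  have "i + (k - a) = i + 1 + (k - Suc a)" if "k \<in> {Suc a..<n}" for k
    using that by auto
  then have "(\<Sum>k\<in>{Suc a..<n}. coeff (X k) (i + (k - a))) =
      (\<Sum>k\<in>{Suc a..<n}. coeff (X k) (i + 1 + (k - Suc a)))"
    by (intro sum.cong) simp_all
  then show "coeff (shifted_tail_sum n X a) i =
      coeff (X a + poly_shift 1 (shifted_tail_sum n X (Suc a))) i"
    using assms by (simp add: coeff_shifted_tail_sum coeff_poly_shift sum.atLeast_Suc_lessThan)
qed

lemma shifted_tail_sum_eqI:
  fixes X A :: "nat \<Rightarrow> 'a::ab_group_add poly"
  assumes "\<And>k. k < n \<Longrightarrow> X k = A k - poly_shift 1 (A (Suc k))" "A n = 0" "a \<le> n"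
  shows "shifted_tail_sum n X a = A a"
  using assms(3)
proof (induction rule: inc_induct)
  case base
  then show ?case using assms(2) by simp
next
  case (step a)
  then show ?case using assms(1) by (simp add: shifted_tail_sum_step)
qed

lemma degree_shifted_tail_sum_less:
  assumes "\<And>k. k < n \<Longrightarrow> degree (X k) < r" "0 < r"
  shows "degree (shifted_tail_sum n X a) < r"
proof (rule degree_lessI)
  show "\<forall>j\<ge>r. coeff (shifted_tail_sum n X a) j = 0"
  proof (intro allI impI)
    fix j
    assume "r \<le> j"
    have "coeff (X k) (j + (k - a)) = 0" if "k \<in> {a..<n}" for k
      using assms(1)[of k] that \<open>r \<le> j\<close> by (intro coeff_eq_0) auto
    then show "coeff (shifted_tail_sum n X a) j = 0"
      by (simp add: coeff_shifted_tail_sum)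
  qed
qed (use assms(2) in simp)

lemma sum_coeff_mult_diagonal:
  fixes p :: "'a::comm_semiring_1 poly"
  shows "(\<Sum>k<n. coeff (p * X k) k) = (\<Sum>m\<le>degree p. coeff p m * coeff (shifted_tail_sum n X m) 0)"
proof -
  have "coeff (p * X k) k = (\<Sum>m\<le>degree p. if m \<le> k then coeff p m * coeff (X k) (k - m) else 0)"
    for k
  proof -
    have "coeff (p * X k) k = (\<Sum>m\<le>k. coeff p m * coeff (X k) (k - m))"
      by (rule coeff_mult)
    also have "\<dots> = (\<Sum>m\<in>{..degree p} \<inter> {..k}. coeff p m * coeff (X k) (k - m))"
      by (rule sum.mono_neutral_right) (auto intro!: le_degree)
    also have "\<dots> = (\<Sum>m\<le>degree p. if m \<le> k then coeff p m * coeff (X k) (k - m) else 0)"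
      by (subst sum.inter_restrict) auto
    finally show ?thesis .
  qed
  then have "(\<Sum>k<n. coeff (p * X k) k) =
      (\<Sum>m\<le>degree p. \<Sum>k<n. if m \<le> k then coeff p m * coeff (X k) (k - m) else 0)"
    by (simp add: sum.swap[of _ "{..degree p}"])
  also have "\<dots> = (\<Sum>m\<le>degree p. coeff p m * coeff (shifted_tail_sum n X m) 0)"
  proof (intro sum.cong refl)
    fix m
    have "(\<Sum>k<n. if m \<le> k then coeff p m * coeff (X k) (k - m) else 0) =
        (\<Sum>k\<in>{m..<n}. coeff p m * coeff (X k) (k - m))"
      by (rule sum.mono_neutral_cong_right) auto
    then show "(\<Sum>k<n. if m \<le> k then coeff p m * coeff (X k) (k - m) else 0) =
        coeff p m * coeff (shifted_tail_sum n X m) 0"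
      by (simp add: coeff_shifted_tail_sum sum_distrib_left)
  qed
  finally show ?thesis .
qed

lemma unitriangular_sum_eq_0_iff:
  fixes c :: "nat \<Rightarrow> nat \<Rightarrow> 'a::idom"
  assumes "\<And>i. c i i \<noteq> 0"
  shows "(\<forall>i<n. (\<Sum>m\<le>i. c i m * y m) = 0) \<longleftrightarrow> (\<forall>m<n. y m = 0)"
proof
  assume eqs: "\<forall>i<n. (\<Sum>m\<le>i. c i m * y m) = 0"
  show "\<forall>m<n. y m = 0"
  proof (intro allI impI)
    fix m
    assume "m < n"
    then show "y m = 0"
    proof (induction m rule: less_induct)
      case (less m)
      then have "(\<Sum>m'<m. c m m' * y m') = 0"
        by (intro sum.neutral) simp
      then have "c m m * y m = 0"
        using eqs[rule_format, OF less.prems] by (simp add: lessThan_Suc_atMost[symmetric])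
      then show ?case
        using assms by simp
    qed
  qed
qed simp

section \<open>The kernel of N0\<close>

definition taylor_block :: "nat \<Rightarrow> 'a::comm_ring_1 \<Rightarrow> 'a vec \<Rightarrow> nat \<Rightarrow> 'a poly" where
  "taylor_block r z x k = translate_poly z (poly_of_vec (vec_block r x k))"

lemma eq_vec_if_taylor_blocks_eq:
  fixes x y :: "'a::comm_ring_1 vec"
  assumes "x \<in> carrier_vec (n * r)" "y \<in> carrier_vec (n * r)"
    and "\<And>k. k < n \<Longrightarrow> taylor_block r z x k = taylor_block r z y k"
  shows "x = y"
  using assms by (intro eq_vec_blocksI[of x n r y]) (simp_all add: taylor_block_def poly_of_vec_inject)

lemma dim_N0 [simp]: "dim_row (N0 q r \<nu> z) = q" "dim_col (N0 q r \<nu> z) = \<nu> * r"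
  by (simp_all add: N0_def)

lemma index_N0:
  assumes "i < q" "k < \<nu>" "j < r"
  shows "N0 q r \<nu> z $$ (i, k * r + j) = coeff ([:z, 1:] ^ (i + j)) k"
  using assms by (simp add: N0_def Mder_def block_index_less higher_deriv_power_eq_coeff)

lemma index_N0_mult_vec:
  assumes "x \<in> carrier_vec (\<nu> * r)" "i < q"
  shows "(N0 q r \<nu> z *\<^sub>v x) $ i = (\<Sum>k<\<nu>. coeff ([:z, 1:] ^ i * taylor_block r z x k) k)"
proof -
  have "(N0 q r \<nu> z *\<^sub>v x) $ i = (\<Sum>c<\<nu> * r. N0 q r \<nu> z $$ (i, c) * x $ c)"
    using assms by (auto simp: scalar_prod_def intro!: sum.cong)
  also have "\<dots> = (\<Sum>k<\<nu>. \<Sum>j<r. coeff ([:z, 1:] ^ (i + j)) k * x $ (k * r + j))"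
    using assms(2) by (auto simp: sum_lessThan_mult index_N0 intro!: sum.cong)
  also have "\<dots> = (\<Sum>k<\<nu>. coeff ([:z, 1:] ^ i * taylor_block r z x k) k)"
    by (simp add: taylor_block_def translate_poly_poly_of_vec vec_block_def sum_distrib_left
        coeff_sum power_add mult.commute)
  finally show ?thesis .
qed

lemma N0_mult_vec_eq_0_iff:
  assumes "x \<in> carrier_vec (\<nu> * r)"
  shows "N0 q r \<nu> z *\<^sub>v x = 0\<^sub>v q \<longleftrightarrow>
    (\<forall>m<q. coeff (shifted_tail_sum \<nu> (taylor_block r z x) m) 0 = 0)"
proof -
  have "(N0 q r \<nu> z *\<^sub>v x) $ i =
      (\<Sum>m\<le>i. coeff ([:z, 1:] ^ i) m * coeff (shifted_tail_sum \<nu> (taylor_block r z x) m) 0)"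
    if "i < q" for i
    using index_N0_mult_vec[OF assms that] by (simp add: sum_coeff_mult_diagonal degree_linear_power)
  moreover have "N0 q r \<nu> z *\<^sub>v x = 0\<^sub>v q \<longleftrightarrow> (\<forall>i<q. (N0 q r \<nu> z *\<^sub>v x) $ i = 0)"
  proof
    assume "\<forall>i<q. (N0 q r \<nu> z *\<^sub>v x) $ i = 0"
    then show "N0 q r \<nu> z *\<^sub>v x = 0\<^sub>v q"
      by (intro eq_vecI) simp_all
  qed simp
  ultimately show ?thesis
    using unitriangular_sum_eq_0_iff[of "\<lambda>i m. coeff ([:z, 1:] ^ i) m"]
    by (simp add: coeff_linear_power)
qed

section \<open>The columns of Kbar\<close>

lemma dim_Fm [simp]: "dim_row (Fm r z) = r" "dim_col (Fm r z) = r - 1"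
  by (simp_all add: Fm_def)

lemma dim_Fm' [simp]: "dim_row (Fm' r z) = r" "dim_col (Fm' r z) = r - 1"
  by (simp_all add: Fm'_def)

lemma dim_Gm [simp]: "dim_row (Gm r z) = r" "dim_col (Gm r z) = r"
  by (simp_all add: Gm_def)

(* Not [simp]: the simplifier rewrites r - 1 to r - Suc 0 in goals, so these rules would not match. *)
lemma Fm_carrier: "Fm r z \<in> carrier_mat r (r - 1)"
  and Fm'_carrier: "Fm' r z \<in> carrier_mat r (r - 1)"
  and Gm_carrier: "Gm r z \<in> carrier_mat r r"
  by (simp_all add: Fm_def Fm'_def Gm_def)

lemma dim_shift_mat [simp]: "dim_row (shift_mat n) = n" "dim_col (shift_mat n) = n"
  by (simp_all add: shift_mat_def)

lemma dim_ellphi [simp]: "dim_row (ellphi q \<nu>) = q" "dim_col (ellphi q \<nu>) = \<nu> - q"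
  by (simp_all add: ellphi_def)

lemma shift_mat_carrier [simp]: "shift_mat n \<in> carrier_mat n n"
  by (simp add: shift_mat_def)

lemma ellphi_carrier [simp]: "ellphi q \<nu> \<in> carrier_mat q (\<nu> - q)"
  by (simp add: ellphi_def)

lemma poly_of_vec_Fm_mult_vec:
  assumes "v \<in> carrier_vec (r - 1)"
  shows "poly_of_vec (Fm r z *\<^sub>v v) = [:-z, 1:] * poly_of_vec v"
proof (rule poly_eqI)
  fix i
  have "Fm r z $$ (i, j) * v $ j = (if j = i then - z * v $ j else 0) +
      (case i of 0 \<Rightarrow> 0 | Suc i' \<Rightarrow> if j = i' then v $ j else 0)"
    if "i < r" "j < r - 1" for j
    using that by (auto simp: Fm_def split: nat.split)
  then have "coeff (poly_of_vec (Fm r z *\<^sub>v v)) i = (if i < r then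
      (if i < r - 1 then - z * v $ i else 0) + (case i of 0 \<Rightarrow> 0 | Suc i' \<Rightarrow> v $ i') else 0)"
    using assms by (auto simp: coeff_poly_of_vec_mult_vec sum.distrib split: nat.split)
  then show "coeff (poly_of_vec (Fm r z *\<^sub>v v)) i = coeff ([:-z, 1:] * poly_of_vec v) i"
    using assms by (auto simp: coeff_poly_of_vec coeff_pCons' split: nat.split)
qed

lemma poly_of_vec_Fm'_mult_vec:
  assumes "v \<in> carrier_vec (r - 1)"
  shows "poly_of_vec (Fm' r z *\<^sub>v v) = - poly_of_vec v"
proof (rule poly_eqI)
  fix i
  have "Fm' r z $$ (i, j) * v $ j = (if j = i then - v $ j else 0)" if "i < r" "j < r - 1" for j
    using that by (auto simp: Fm'_def)
  then have "coeff (poly_of_vec (Fm' r z *\<^sub>v v)) i = (if i < r - 1 then - v $ i else 0)"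
    using assms by (auto simp: coeff_poly_of_vec_mult_vec)
  then show "coeff (poly_of_vec (Fm' r z *\<^sub>v v)) i = coeff (- poly_of_vec v) i"
    using assms by (simp add: coeff_poly_of_vec)
qed

lemma poly_of_vec_Gm_mult_vec:
  assumes "v \<in> carrier_vec r"
  shows "poly_of_vec (Gm r z *\<^sub>v v) = synthetic_div (poly_of_vec v) z"
proof (rule poly_eqI)
  fix i
  have "(\<Sum>j\<in>{Suc i..degree (poly_of_vec v)}. z ^ (j - Suc i) * coeff (poly_of_vec v) j)
      = (\<Sum>j\<in>{Suc i..<r}. z ^ (j - Suc i) * v $ j)"
  proof (cases "r = 0")
    case False
    then have "degree (poly_of_vec v) < r"
      using assms degree_poly_of_vec_less[of v] by auto
    moreover have "v $ j = 0" if "degree (poly_of_vec v) < j" "j < r" for j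
      using that assms coeff_eq_0[OF that(1)] by (simp add: coeff_poly_of_vec)
    ultimately show ?thesis
      using assms by (intro sum.mono_neutral_cong_left) (auto simp: coeff_poly_of_vec)
  qed (use assms in \<open>simp add: coeff_poly_of_vec\<close>)
  moreover have "coeff (poly_of_vec (Gm r z *\<^sub>v v)) i =
      (if i < r then \<Sum>j\<in>{Suc i..<r}. z ^ (j - Suc i) * v $ j else 0)"
    using assms by (auto simp: coeff_poly_of_vec_mult_vec Gm_def
        intro!: sum.mono_neutral_cong_right)
  ultimately show "coeff (poly_of_vec (Gm r z *\<^sub>v v)) i =
      coeff (synthetic_div (poly_of_vec v) z) i"
    by (simp add: coeff_synthetic_div)
qed

lemma poly_of_vec_block_kron_one_mat_mult_vec:
  fixes B :: "'a::comm_ring_1 mat"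
  assumes "B \<in> carrier_mat m1 m2" "v \<in> carrier_vec (n * m2)" "k < n"
  shows "poly_of_vec (vec_block m1 (kron (1\<^sub>m n) B *\<^sub>v v) k) =
    poly_of_vec (B *\<^sub>v vec_block m2 v k)"
proof -
  have "(\<Sum>b<n. Polynomial.smult (1\<^sub>m n $$ (k, b)) (poly_of_vec (B *\<^sub>v vec_block m2 v b))) =
      (\<Sum>b<n. if b = k then poly_of_vec (B *\<^sub>v vec_block m2 v b) else 0)"
    using assms(3) by (intro sum.cong) auto
  then show ?thesis
    using assms by (simp add: poly_of_vec_block_kron_mult_vec[OF one_carrier_mat])
qed

lemma poly_of_vec_block_kron_shift_mat_mult_vec:
  assumes "B \<in> carrier_mat m1 m2" "v \<in> carrier_vec (n * m2)" "k < n"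
  shows "poly_of_vec (vec_block m1 (kron (shift_mat n) B *\<^sub>v v) k) =
    (if Suc k < n then poly_of_vec (B *\<^sub>v vec_block m2 v (Suc k)) else 0)"
proof -
  have "(\<Sum>b<n. Polynomial.smult (shift_mat n $$ (k, b)) (poly_of_vec (B *\<^sub>v vec_block m2 v b))) =
      (\<Sum>b<n. if b = Suc k then poly_of_vec (B *\<^sub>v vec_block m2 v b) else 0)"
    using assms(3) by (intro sum.cong) (auto simp: shift_mat_def)
  then show ?thesis
    using assms by (simp add: poly_of_vec_block_kron_mult_vec[OF shift_mat_carrier])
qed

lemma poly_of_vec_block_kron_ellphi_mult_vec:
  assumes "B \<in> carrier_mat m1 m2" "v \<in> carrier_vec ((\<nu> - q) * m2)" "k < q" "q < \<nu>"
  shows "poly_of_vec (vec_block m1 (kron (ellphi q \<nu>) B *\<^sub>v v) k) =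
    (if Suc k = q then poly_of_vec (B *\<^sub>v vec_block m2 v 0) else 0)"
proof -
  have "(\<Sum>b<\<nu> - q. Polynomial.smult (ellphi q \<nu> $$ (k, b)) (poly_of_vec (B *\<^sub>v vec_block m2 v b))) =
      (\<Sum>b<\<nu> - q. if b = 0 then (if Suc k = q then poly_of_vec (B *\<^sub>v vec_block m2 v b) else 0) else 0)"
    using assms(3) by (intro sum.cong) (auto simp: ellphi_def)
  then show ?thesis
    using assms by (simp add: poly_of_vec_block_kron_mult_vec[OF ellphi_carrier])
qed

lemma dim_Kbar [simp]:
  "q \<le> \<nu> \<Longrightarrow> dim_row (Kbar q r \<nu> z) = \<nu> * r"
  "dim_col (Kbar q r \<nu> z) = q * (r - 1) + (\<nu> - q) * r"
  by (simp_all add: Kbar_def add_mult_distrib[symmetric])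

lemma Kbar_cols_dim:
  fixes q r \<nu> :: nat
  assumes "q \<le> \<nu>" "0 < r"
  shows "\<nu> * r - q = q * (r - 1) + (\<nu> - q) * r"
proof -
  obtain d r' where "\<nu> = q + d" "r = Suc r'"
    using assms by (metis le_add_diff_inverse gr0_implies_Suc)
  then show ?thesis
    by (simp add: algebra_simps)
qed

lemma Kbar_carrier: "q \<le> \<nu> \<Longrightarrow> 0 < r \<Longrightarrow> Kbar q r \<nu> z \<in> carrier_mat (\<nu> * r) (\<nu> * r - q)"
  by (intro carrier_matI) (simp_all add: Kbar_cols_dim)

lemma carrier_vec_Kbar_colsE:
  assumes "q \<le> \<nu>" "0 < r" "c \<in> carrier_vec (\<nu> * r - q)"
  obtains c1 c2 where "c1 \<in> carrier_vec (q * (r - 1))" "c2 \<in> carrier_vec ((\<nu> - q) * r)"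
    "c = c1 @\<^sub>v c2"
proof -
  have "c \<in> carrier_vec (q * (r - 1) + (\<nu> - q) * r)"
    using assms by (simp add: Kbar_cols_dim)
  then show ?thesis
    using that[of "vec_first c (q * (r - 1))" "vec_last c ((\<nu> - q) * r)"] by simp
qed

lemma Kbar_mult_vec_append:
  assumes "c1 \<in> carrier_vec (q * (r - 1))" "c2 \<in> carrier_vec ((\<nu> - q) * r)"
  shows "Kbar q r \<nu> z *\<^sub>v (c1 @\<^sub>v c2) =
    (kron (1\<^sub>m q) (Fm r z) *\<^sub>v c1 + kron (shift_mat q) (Fm' r z) *\<^sub>v c1
      + - (kron (ellphi q \<nu>) (Gm r z) *\<^sub>v c2)) @\<^sub>v
    (kron (1\<^sub>m (\<nu> - q)) (1\<^sub>m r) *\<^sub>v c2 - kron (shift_mat (\<nu> - q)) (Gm r z) *\<^sub>v c2)"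
proof -
  let ?TL = "kron (1\<^sub>m q) (Fm r z) + kron (shift_mat q) (Fm' r z)"
  let ?TR = "- kron (ellphi q \<nu>) (Gm r z)"
  let ?BL = "0\<^sub>m ((\<nu> - q) * r) (q * (r - 1)) :: complex mat"
  let ?BR = "kron (1\<^sub>m (\<nu> - q)) (1\<^sub>m r) - kron (shift_mat (\<nu> - q)) (Gm r z)"
  have TL: "?TL \<in> carrier_mat (q * r) (q * (r - 1))"
    by (intro add_carrier_mat kron_carrier one_carrier_mat shift_mat_carrier Fm_carrier Fm'_carrier)
  have TR: "?TR \<in> carrier_mat (q * r) ((\<nu> - q) * r)"
    by (intro uminus_carrier_mat kron_carrier ellphi_carrier Gm_carrier)
  have BL: "?BL \<in> carrier_mat ((\<nu> - q) * r) (q * (r - 1))"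
    by simp
  have BR: "?BR \<in> carrier_mat ((\<nu> - q) * r) ((\<nu> - q) * r)"
    by (intro minus_carrier_mat kron_carrier one_carrier_mat shift_mat_carrier Gm_carrier)
  have "Kbar q r \<nu> z *\<^sub>v (c1 @\<^sub>v c2) = (?TL *\<^sub>v c1 + ?TR *\<^sub>v c2) @\<^sub>v (?BL *\<^sub>v c1 + ?BR *\<^sub>v c2)"
    unfolding Kbar_def by (rule four_block_mat_mult_vec[OF TL TR BL BR assms])
  moreover have "?TL *\<^sub>v c1 = kron (1\<^sub>m q) (Fm r z) *\<^sub>v c1 + kron (shift_mat q) (Fm' r z) *\<^sub>v c1"
    using add_mult_distrib_mat_vec[OF kron_carrier[OF one_carrier_mat Fm_carrier]
        kron_carrier[OF shift_mat_carrier Fm'_carrier] assms(1)] .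
  moreover have "?TR *\<^sub>v c2 = - (kron (ellphi q \<nu>) (Gm r z) *\<^sub>v c2)"
    using assms(2) by (intro uminus_mult_mat_vec) simp
  moreover have "?BL *\<^sub>v c1 = 0\<^sub>v ((\<nu> - q) * r)"
    using assms(1) by (intro eq_vecI) auto
  moreover have "?BR *\<^sub>v c2 =
      kron (1\<^sub>m (\<nu> - q)) (1\<^sub>m r) *\<^sub>v c2 - kron (shift_mat (\<nu> - q)) (Gm r z) *\<^sub>v c2"
    using minus_mult_distrib_mat_vec[OF kron_carrier[OF one_carrier_mat one_carrier_mat]
        kron_carrier[OF shift_mat_carrier Gm_carrier] assms(2)] .
  moreover have "?BR *\<^sub>v c2 \<in> carrier_vec ((\<nu> - q) * r)"
    using BR assms(2) by (rule mult_mat_vec_carrier)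
  ultimately show ?thesis
    by (simp only: left_zero_vec)
qed

lemma poly_of_vec_block_Kbar_mult_vec_top:
  assumes c1: "c1 \<in> carrier_vec (q * (r - 1))" and c2: "c2 \<in> carrier_vec ((\<nu> - q) * r)"
    and "q < \<nu>" "k < q"
  shows "poly_of_vec (vec_block r (Kbar q r \<nu> z *\<^sub>v (c1 @\<^sub>v c2)) k) =
    [:-z, 1:] * poly_of_vec (vec_block (r - 1) c1 k) -
    (if Suc k < q then poly_of_vec (vec_block (r - 1) c1 (Suc k))
     else synthetic_div (poly_of_vec (vec_block r c2 0)) z)"
proof -
  define u1 where "u1 = kron (1\<^sub>m q) (Fm r z) *\<^sub>v c1"
  define u2 where "u2 = kron (shift_mat q) (Fm' r z) *\<^sub>v c1"
  define u3 where "u3 = kron (ellphi q \<nu>) (Gm r z) *\<^sub>v c2"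
  define w where "w = kron (1\<^sub>m (\<nu> - q)) (1\<^sub>m r) *\<^sub>v c2 - kron (shift_mat (\<nu> - q)) (Gm r z) *\<^sub>v c2"
  have u: "u1 \<in> carrier_vec (q * r)" "u2 \<in> carrier_vec (q * r)" "u3 \<in> carrier_vec (q * r)"
    by (simp_all add: u1_def u2_def u3_def carrier_dim_vec)
  have w: "w \<in> carrier_vec ((\<nu> - q) * r)"
    by (simp add: w_def carrier_dim_vec)
  have "Kbar q r \<nu> z *\<^sub>v (c1 @\<^sub>v c2) = (u1 + u2 + - u3) @\<^sub>v w"
    unfolding u1_def u2_def u3_def w_def by (rule Kbar_mult_vec_append[OF c1 c2])
  then have "vec_block r (Kbar q r \<nu> z *\<^sub>v (c1 @\<^sub>v c2)) k = vec_block r (u1 + u2 + - u3) k"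
    using u w assms(3,4) by (simp add: vec_block_append[of _ q r w "\<nu> - q"])
  then have "poly_of_vec (vec_block r (Kbar q r \<nu> z *\<^sub>v (c1 @\<^sub>v c2)) k) =
      poly_of_vec (vec_block r u1 k) + poly_of_vec (vec_block r u2 k) - poly_of_vec (vec_block r u3 k)"
    using u assms(4) by (simp add: vec_block_add vec_block_uminus poly_of_vec_add poly_of_vec_uminus)
  also have "poly_of_vec (vec_block r u1 k) = [:-z, 1:] * poly_of_vec (vec_block (r - 1) c1 k)"
    using c1 assms(4) by (simp add: u1_def poly_of_vec_block_kron_one_mat_mult_vec[OF Fm_carrier]
        poly_of_vec_Fm_mult_vec)
  also have "poly_of_vec (vec_block r u2 k) =
      (if Suc k < q then - poly_of_vec (vec_block (r - 1) c1 (Suc k)) else 0)"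
    using c1 assms(4) by (simp add: u2_def poly_of_vec_block_kron_shift_mat_mult_vec[OF Fm'_carrier]
        poly_of_vec_Fm'_mult_vec)
  also have "poly_of_vec (vec_block r u3 k) =
      (if Suc k = q then synthetic_div (poly_of_vec (vec_block r c2 0)) z else 0)"
    using c2 assms(3,4) by (simp add: u3_def poly_of_vec_block_kron_ellphi_mult_vec[OF Gm_carrier]
        poly_of_vec_Gm_mult_vec)
  finally show ?thesis
    using assms(4) by auto
qed

lemma poly_of_vec_block_Kbar_mult_vec_bottom:
  assumes c1: "c1 \<in> carrier_vec (q * (r - 1))" and c2: "c2 \<in> carrier_vec ((\<nu> - q) * r)"
    and "b < \<nu> - q"
  shows "poly_of_vec (vec_block r (Kbar q r \<nu> z *\<^sub>v (c1 @\<^sub>v c2)) (q + b)) =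
    poly_of_vec (vec_block r c2 b) -
    (if Suc b < \<nu> - q then synthetic_div (poly_of_vec (vec_block r c2 (Suc b))) z else 0)"
proof -
  define u where "u = kron (1\<^sub>m q) (Fm r z) *\<^sub>v c1 + kron (shift_mat q) (Fm' r z) *\<^sub>v c1
      + - (kron (ellphi q \<nu>) (Gm r z) *\<^sub>v c2)"
  define w1 where "w1 = kron (1\<^sub>m (\<nu> - q)) (1\<^sub>m r) *\<^sub>v c2"
  define w2 where "w2 = kron (shift_mat (\<nu> - q)) (Gm r z) *\<^sub>v c2"
  have w: "w1 \<in> carrier_vec ((\<nu> - q) * r)" "w2 \<in> carrier_vec ((\<nu> - q) * r)"
    by (simp_all add: w1_def w2_def carrier_dim_vec)
  have u: "u \<in> carrier_vec (q * r)"
    by (simp add: u_def carrier_dim_vec)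
  have "Kbar q r \<nu> z *\<^sub>v (c1 @\<^sub>v c2) = u @\<^sub>v (w1 - w2)"
    unfolding u_def w1_def w2_def by (rule Kbar_mult_vec_append[OF c1 c2])
  then have "vec_block r (Kbar q r \<nu> z *\<^sub>v (c1 @\<^sub>v c2)) (q + b) = vec_block r (w1 - w2) b"
    using u w assms(3) by (simp add: vec_block_append[of u q r _ "\<nu> - q"])
  then have "poly_of_vec (vec_block r (Kbar q r \<nu> z *\<^sub>v (c1 @\<^sub>v c2)) (q + b)) =
      poly_of_vec (vec_block r w1 b) - poly_of_vec (vec_block r w2 b)"
    using w assms(3) by (simp add: vec_block_diff poly_of_vec_diff)
  also have "poly_of_vec (vec_block r w1 b) = poly_of_vec (vec_block r c2 b)"
    using c2 assms(3) by (simp add: w1_def poly_of_vec_block_kron_one_mat_mult_vec[OF one_carrier_mat])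
  also have "poly_of_vec (vec_block r w2 b) =
      (if Suc b < \<nu> - q then synthetic_div (poly_of_vec (vec_block r c2 (Suc b))) z else 0)"
    using c2 assms(3) by (simp add: w2_def poly_of_vec_block_kron_shift_mat_mult_vec[OF Gm_carrier]
        poly_of_vec_Gm_mult_vec)
  finally show ?thesis .
qed

(* The polynomials A_k of the proof idea: in the variable t = w - z, A_k = t C_k for the parameter
   blocks C_k of c1 (k < q) and A_k = D_(k-q) for the blocks of c2. *)
definition Kbar_coord ::
    "nat \<Rightarrow> nat \<Rightarrow> nat \<Rightarrow> complex \<Rightarrow> complex vec \<Rightarrow> complex vec \<Rightarrow> nat \<Rightarrow> complex poly" where
  "Kbar_coord q r \<nu> z c1 c2 k =
    (if k < q then pCons 0 (translate_poly z (poly_of_vec (vec_block (r - 1) c1 k)))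
     else if k < \<nu> then translate_poly z (poly_of_vec (vec_block r c2 (k - q)))
     else 0)"

lemma taylor_block_Kbar_mult_vec:
  assumes c1: "c1 \<in> carrier_vec (q * (r - 1))" and c2: "c2 \<in> carrier_vec ((\<nu> - q) * r)"
    and "q < \<nu>" "k < \<nu>"
  shows "taylor_block r z (Kbar q r \<nu> z *\<^sub>v (c1 @\<^sub>v c2)) k =
    Kbar_coord q r \<nu> z c1 c2 k - poly_shift 1 (Kbar_coord q r \<nu> z c1 c2 (Suc k))"
proof (cases "k < q")
  case True
  then show ?thesis
    using assms by (auto simp: taylor_block_def Kbar_coord_def poly_of_vec_block_Kbar_mult_vec_top
        translate_poly_diff translate_poly_linear_mult translate_poly_synthetic_div
        simp del: mult_pCons_left)
next
  case False
  then obtain b where b: "k = q + b" "b < \<nu> - q"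
    using assms(4) by (intro that[of "k - q"]) auto
  then show ?thesis
    using assms by (auto simp: taylor_block_def Kbar_coord_def poly_of_vec_block_Kbar_mult_vec_bottom
        translate_poly_diff translate_poly_synthetic_div)
qed

lemma shifted_tail_sum_taylor_block_Kbar:
  assumes c1: "c1 \<in> carrier_vec (q * (r - 1))" and c2: "c2 \<in> carrier_vec ((\<nu> - q) * r)"
    and "q < \<nu>" "m \<le> \<nu>"
  shows "shifted_tail_sum \<nu> (taylor_block r z (Kbar q r \<nu> z *\<^sub>v (c1 @\<^sub>v c2))) m =
    Kbar_coord q r \<nu> z c1 c2 m"
  using assms by (intro shifted_tail_sum_eqI) (simp_all add: taylor_block_Kbar_mult_vec Kbar_coord_def)

lemma coeff_Kbar_coord_0: "k < q \<Longrightarrow> coeff (Kbar_coord q r \<nu> z c1 c2 k) 0 = 0"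
  by (simp add: Kbar_coord_def)

lemma Kbar_coord_eq_0D:
  assumes c1: "c1 \<in> carrier_vec (q * (r - 1))" and c2: "c2 \<in> carrier_vec ((\<nu> - q) * r)"
    and "q \<le> \<nu>" and zero: "\<And>k. k < \<nu> \<Longrightarrow> Kbar_coord q r \<nu> z c1 c2 k = 0"
  shows "c1 = 0\<^sub>v (q * (r - 1)) \<and> c2 = 0\<^sub>v ((\<nu> - q) * r)"
proof
  have "vec_block (r - 1) c1 a = vec_block (r - 1) (0\<^sub>v (q * (r - 1))) a" if "a < q" for a
    using zero[of a] that assms(3) by (simp add: Kbar_coord_def poly_of_vec_eq_0_iff)
  then show "c1 = 0\<^sub>v (q * (r - 1))"
    using c1 by (intro eq_vec_blocksI[of c1 q "r - 1"]) simp_all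
  have "vec_block r c2 b = vec_block r (0\<^sub>v ((\<nu> - q) * r)) b" if "b < \<nu> - q" for b
    using zero[of "q + b"] that by (simp add: Kbar_coord_def poly_of_vec_eq_0_iff)
  then show "c2 = 0\<^sub>v ((\<nu> - q) * r)"
    using c2 by (intro eq_vec_blocksI[of c2 "\<nu> - q" r]) simp_all
qed

lemma Kbar_coord_surj:
  assumes "1 < r" "q \<le> \<nu>"
    and deg: "\<And>k. k < \<nu> \<Longrightarrow> degree (Y k) < r" and coeff0: "\<And>k. k < q \<Longrightarrow> coeff (Y k) 0 = 0"
  shows "\<exists>c1\<in>carrier_vec (q * (r - 1)). \<exists>c2\<in>carrier_vec ((\<nu> - q) * r).
    \<forall>k<\<nu>. Kbar_coord q r \<nu> z c1 c2 k = Y k"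
proof -
  define c1 where "c1 = vec_of_blocks (r - 1) q
      (\<lambda>a. vec (r - 1) (coeff (translate_poly (- z) (poly_shift 1 (Y a)))))"
  define c2 where "c2 = vec_of_blocks r (\<nu> - q) (\<lambda>b. vec r (coeff (translate_poly (- z) (Y (q + b)))))"
  have "Kbar_coord q r \<nu> z c1 c2 k = Y k" if k: "k < \<nu>" for k
  proof (cases "k < q")
    case True
    have "degree (translate_poly (- z) (poly_shift 1 (Y k))) < r - 1"
      using deg[OF k] assms(1) by (simp add: degree_poly_shift)
    then have "poly_of_vec (vec_block (r - 1) c1 k) = translate_poly (- z) (poly_shift 1 (Y k))"
      using True by (simp add: c1_def vec_block_vec_of_blocks poly_of_vec_vec_coeff)
    then have "Kbar_coord q r \<nu> z c1 c2 k = pCons 0 (poly_shift 1 (Y k))"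
      using True by (simp add: Kbar_coord_def)
    also have "\<dots> = Y k"
      using coeff0[OF True] by (rule pCons_0_poly_shift_1)
    finally show ?thesis .
  next
    case False
    then obtain b where b: "k = q + b" "b < \<nu> - q"
      using k by (intro that[of "k - q"]) auto
    then have "poly_of_vec (vec_block r c2 b) = translate_poly (- z) (Y k)"
      using deg[OF k] by (simp add: c2_def vec_block_vec_of_blocks poly_of_vec_vec_coeff)
    then show ?thesis
      using b k by (simp add: Kbar_coord_def)
  qed
  moreover have "c1 \<in> carrier_vec (q * (r - 1))" "c2 \<in> carrier_vec ((\<nu> - q) * r)"
    by (simp_all add: c1_def c2_def)
  ultimately show ?thesis
    by blast
qed

lemma N0_mult_Kbar_mult_vec:
  assumes "q < \<nu>" "0 < r" "c \<in> carrier_vec (\<nu> * r - q)"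
  shows "N0 q r \<nu> z *\<^sub>v (Kbar q r \<nu> z *\<^sub>v c) = 0\<^sub>v q"
proof -
  obtain c1 c2 where c1: "c1 \<in> carrier_vec (q * (r - 1))" and c2: "c2 \<in> carrier_vec ((\<nu> - q) * r)"
    and c: "c = c1 @\<^sub>v c2"
    using carrier_vec_Kbar_colsE[OF less_imp_le[OF assms(1)] assms(2,3)] by blast
  have "Kbar q r \<nu> z *\<^sub>v c \<in> carrier_vec (\<nu> * r)"
    using assms(1) by (intro carrier_vecI) simp
  then show ?thesis
    using assms(1) c1 c2 unfolding c
    by (simp add: N0_mult_vec_eq_0_iff shifted_tail_sum_taylor_block_Kbar coeff_Kbar_coord_0)
qed

lemma Kbar_mult_vec_eq_0D:
  assumes "q < \<nu>" "0 < r" "c \<in> carrier_vec (\<nu> * r - q)"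
    and zero: "Kbar q r \<nu> z *\<^sub>v c = 0\<^sub>v (\<nu> * r)"
  shows "c = 0\<^sub>v (\<nu> * r - q)"
proof -
  obtain c1 c2 where c1: "c1 \<in> carrier_vec (q * (r - 1))" and c2: "c2 \<in> carrier_vec ((\<nu> - q) * r)"
    and c: "c = c1 @\<^sub>v c2"
    using carrier_vec_Kbar_colsE[OF less_imp_le[OF assms(1)] assms(2,3)] by blast
  have "Kbar_coord q r \<nu> z c1 c2 k = 0" if "k < \<nu>" for k
  proof -
    have "shifted_tail_sum \<nu> (taylor_block r z (0\<^sub>v (\<nu> * r))) k = 0"
      by (auto simp: shifted_tail_sum_def taylor_block_def intro!: sum.neutral)
    then show ?thesis
      using shifted_tail_sum_taylor_block_Kbar[OF c1 c2 assms(1), of k z] that zero c by simp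
  qed
  then have "c1 = 0\<^sub>v (q * (r - 1))" "c2 = 0\<^sub>v ((\<nu> - q) * r)"
    using Kbar_coord_eq_0D[OF c1 c2] assms(1) by auto
  then show ?thesis
    using assms(1,2) unfolding c by (intro eq_vecI) (simp_all add: Kbar_cols_dim)
qed

lemma Kbar_mult_vec_inj:
  assumes "q < \<nu>" "0 < r" "c \<in> carrier_vec (\<nu> * r - q)" "c' \<in> carrier_vec (\<nu> * r - q)"
    and "Kbar q r \<nu> z *\<^sub>v c = Kbar q r \<nu> z *\<^sub>v c'"
  shows "c = c'"
proof -
  have K: "Kbar q r \<nu> z \<in> carrier_mat (\<nu> * r) (\<nu> * r - q)"
    using assms(1,2) by (simp add: Kbar_carrier)
  then have "Kbar q r \<nu> z *\<^sub>v (c - c') = 0\<^sub>v (\<nu> * r)"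
    using assms(3-5) by (simp add: mult_minus_distrib_mat_vec)
  then have "c - c' = 0\<^sub>v (\<nu> * r - q)"
    using assms(1-4) by (intro Kbar_mult_vec_eq_0D) auto
  show ?thesis
  proof (rule eq_vecI)
    fix i
    assume "i < dim_vec c'"
    then show "c $ i = c' $ i"
      using arg_cong[OF \<open>c - c' = 0\<^sub>v (\<nu> * r - q)\<close>, of "\<lambda>v. v $ i"] assms(3,4) by simp
  qed (use assms(3,4) in simp)
qed

lemma N0_kernel_subset_Kbar_range:
  assumes "1 < r" "q < \<nu>" and x: "x \<in> carrier_vec (\<nu> * r)" and ker: "N0 q r \<nu> z *\<^sub>v x = 0\<^sub>v q"
  shows "\<exists>c\<in>carrier_vec (\<nu> * r - q). Kbar q r \<nu> z *\<^sub>v c = x"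
proof -
  let ?X = "taylor_block r z x"
  let ?Y = "shifted_tail_sum \<nu> ?X"
  have "degree (?X k) < r" for k
    using assms(1) degree_poly_of_vec_less[of "vec_block r x k"] by (simp add: taylor_block_def)
  then have deg: "degree (?Y k) < r" for k
    using assms(1) by (intro degree_shifted_tail_sum_less) auto
  have coeff0: "coeff (?Y k) 0 = 0" if "k < q" for k
    using ker that by (simp add: N0_mult_vec_eq_0_iff[OF x])
  obtain c1 c2 where c1: "c1 \<in> carrier_vec (q * (r - 1))" and c2: "c2 \<in> carrier_vec ((\<nu> - q) * r)"
    and coord: "\<And>k. k < \<nu> \<Longrightarrow> Kbar_coord q r \<nu> z c1 c2 k = ?Y k"
    using Kbar_coord_surj[where Y = ?Y and z = z, OF assms(1) less_imp_le[OF assms(2)] deg coeff0]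
    by blast
  have coord_nu: "Kbar_coord q r \<nu> z c1 c2 \<nu> = ?Y \<nu>"
    using assms(2) by (simp add: Kbar_coord_def)
  have "taylor_block r z (Kbar q r \<nu> z *\<^sub>v (c1 @\<^sub>v c2)) k = ?X k" if k: "k < \<nu>" for k
  proof -
    have "Kbar_coord q r \<nu> z c1 c2 (Suc k) = ?Y (Suc k)"
      using coord coord_nu k by (cases "Suc k = \<nu>") auto
    then show ?thesis
      using taylor_block_Kbar_mult_vec[OF c1 c2 assms(2) k, of z] coord[OF k]
        shifted_tail_sum_step[OF k, of ?X] by simp
  qed
  moreover have "Kbar q r \<nu> z *\<^sub>v (c1 @\<^sub>v c2) \<in> carrier_vec (\<nu> * r)"
    using assms(2) by (intro carrier_vecI) simp
  ultimately have "Kbar q r \<nu> z *\<^sub>v (c1 @\<^sub>v c2) = x"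
    using x by (intro eq_vec_if_taylor_blocks_eq[of _ \<nu> r _ z]) simp_all
  moreover have "c1 @\<^sub>v c2 \<in> carrier_vec (\<nu> * r - q)"
    using append_carrier_vec[OF c1 c2] Kbar_cols_dim[of q \<nu> r] assms(1,2) by simp
  ultimately show ?thesis
    by blast
qed

theorem proposition4p6:
  fixes q r \<nu> :: nat and z :: complex
  assumes "q \<ge> 1" "r \<ge> 1" "\<nu> \<ge> 1" "q + 1 \<le> \<nu>" "\<nu> \<le> q + r - 1"
  shows "N0 q r \<nu> z * Kbar q r \<nu> z = 0\<^sub>m q (\<nu> * r - q)
    \<and> (\<forall>x \<in> mat_kernel (N0 q r \<nu> z).
          \<exists>!c. c \<in> carrier_vec (\<nu> * r - q) \<and> Kbar q r \<nu> z *\<^sub>v c = x)"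
proof -
  \<comment> \<open>The upper bound on \<open>\<nu>\<close> only serves to guarantee \<open>r \<ge> 2\<close>.\<close>
  from assms have r: "1 < r" and qv: "q < \<nu>"
    by auto
  then have r0: "0 < r"
    by simp
  have N0: "N0 q r \<nu> z \<in> carrier_mat q (\<nu> * r)"
    by (intro carrier_matI) simp_all
  have "N0 q r \<nu> z * Kbar q r \<nu> z = 0\<^sub>m q (\<nu> * r - q)"
    using N0 Kbar_carrier N0_mult_Kbar_mult_vec qv r0 by (intro mult_mat_eq_0I) auto
  moreover have "\<exists>!c. c \<in> carrier_vec (\<nu> * r - q) \<and> Kbar q r \<nu> z *\<^sub>v c = x"
    if x: "x \<in> mat_kernel (N0 q r \<nu> z)" for x
  proof -
    obtain c where "c \<in> carrier_vec (\<nu> * r - q)" "Kbar q r \<nu> z *\<^sub>v c = x"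
      using N0_kernel_subset_Kbar_range[OF r qv] mat_kernelD[OF N0 x] by blast
    then show ?thesis
      by (intro ex1I[of _ c]) (auto intro: Kbar_mult_vec_inj[OF qv r0])
  qed
  ultimately show ?thesis
    by blast
qed

end
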